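(* Let $\alpha\in(0,1]$, $\mu\in(0,1]$, $\lambda>0$, and define $(c^{(\mu)}_k)_{k\ge0}$ by $\sum_{k\ge0}c^{(\mu)}_ku^k=\Big(\frac{(1-u)^\alpha}{\lambda+(1-u)^\alpha}\Big)^\mu$ for $|u|<1$. Then $c^{(\mu)}_0=(\lambda+1)^{-\mu}>0$, $c^{(\mu)}_k<0$ for all $k\ge1$, and $\sum_{k\ge0}c^{(\mu)}_k=0$. Equivalently, the upper triangular circulant matrix $[g_{ML,\alpha}(\mathcal L)]^\mu=\mathcal L^{\alpha\mu}(\lambda\mathbf 1+\mathcal L^\alpha)^{-\mu}$, which for $\mu\in(0,1)$ equals $-\frac1{\Gamma(-\mu)}\int_0^\infty(\mathbf 1-e^{-\tau g_{ML,\alpha}(\mathcal L)})\tau^{-\mu-1}d\tau$, satisfies the good Laplacian properties (zero row sums, positive diagonal, non-positive off-diagonal entries), and $\delta_{mn}-[g_{ML,\alpha}(\mathcal L)]^\mu_{m,n}/c^{(\mu)}_0$ is a transition matrix with strictly positive entries for $n>m$.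
   Context: $\mathcal L$ is the $\mathbb Z\times\mathbb Z$ matrix $\mathcal L_{mn}=\delta_{mn}-\delta_{m,n-1}$; a matrix function of $\mathcal L$ with generating function $F(1-u)=\sum_kf_ku^k$ is the upper triangular circulant matrix with entries $[F]_{m,n}=f_{n-m}$ ($n\ge m$), $0$ otherwise. $g_{ML,\alpha}(\mathcal L)$ has generating function $\frac{(1-u)^\alpha}{\lambda+(1-u)^\alpha}$. *)

theory Defs
  imports "HOL-Analysis.Analysis"
begin

text \<open>Generating function of g_ML,alpha raised to the power mu, real and complex versions
  (principal branches; 1 - u has positive real part for norm u < 1).\<close>
definition gML_pow_real :: "real \<Rightarrow> real \<Rightarrow> real \<Rightarrow> real \<Rightarrow> real" where
  "gML_pow_real \<alpha> lam \<mu> u = ((1 - u) powr \<alpha> / (lam + (1 - u) powr \<alpha>)) powr \<mu>"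

definition gML_pow_cplx :: "real \<Rightarrow> real \<Rightarrow> real \<Rightarrow> complex \<Rightarrow> complex" where
  "gML_pow_cplx \<alpha> lam \<mu> u =
     ((1 - u) powr (complex_of_real \<alpha>) / (complex_of_real lam + (1 - u) powr (complex_of_real \<alpha>)))
       powr (complex_of_real \<mu>)"

definition cML :: "real \<Rightarrow> real \<Rightarrow> real \<Rightarrow> nat \<Rightarrow> real" where
  "cML \<alpha> lam \<mu> k = (deriv ^^ k) (gML_pow_real \<alpha> lam \<mu>) 0 / fact k"

definition ut_circulant :: "(nat \<Rightarrow> real) \<Rightarrow> int \<Rightarrow> int \<Rightarrow> real" where
  "ut_circulant f m n = (if m \<le> n then f (nat (n - m)) else 0)"

end

theory Submission
  imports Defs "HOL-Complex_Analysis.Complex_Analysis" "HOL-Library.Complex_Order"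
begin

text \<open>The coefficients of X(u) = (1 - u)^\<alpha> beyond the constant term are (-1)^n binom(\<alpha>, n) \<le> 0,
  so a recursion on the coefficients shows that 1/(\<lambda> + X) has positive coefficients. Hence
  g = X/(\<lambda> + X) = (1 - E)/(\<lambda> + 1) where E has no constant term and positive coefficients.
  In the binomial expansion of (1 - E)^\<mu> every term after the constant one has the sign of
  (-1)^i binom(\<mu>, i) \<le> 0 for 0 < \<mu> \<le> 1, and the linear term -\<mu> E is strictly negative;
  this gives c_k < 0 for k \<ge> 1. Since the coefficients are negative after the first, the series
  converges at u = 1 to the Abel limit of g^\<mu>, which is 0.\<close>

section \<open>Signs of power series coefficients\<close>

lemma gbinomial_alternating_nonpos:
  fixes a :: real
  assumes "0 < a" "a \<le> 1" "1 \<le> n"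
  shows "(-1) ^ n * (a gchoose n) \<le> 0"
proof -
  obtain m where n: "n = Suc m" using assms(3) by (cases n) auto
  have "(-1) ^ n * (a gchoose n) = - a * pochhammer (1 - a) m / fact n"
    by (simp add: gbinomial_pochhammer n pochhammer_rec)
  moreover have "0 \<le> pochhammer (1 - a) m"
    using assms(2) by (auto simp: pochhammer_prod intro!: prod_nonneg)
  ultimately show ?thesis
    using assms(1) by (simp add: divide_nonpos_pos mult_nonpos_nonneg)
qed

lemma complex_of_real_gbinomial: "complex_of_real (a gchoose n) = of_real a gchoose n"
  by (simp add: gbinomial_prod_rev)

lemma fps_nth_binomial_compose_uminus_X:
  "fps_nth (fps_binomial c oo - fps_X) n = (-1) ^ n * (c gchoose n)"
  by (simp add: fps_compose_uminus')

text \<open>Signs of complex coefficients refer to the order of Complex_Order, in which 0 < z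
  means that z is a positive real.\<close>

lemma complex_mult_pos: "0 < (a::complex) \<Longrightarrow> 0 < b \<Longrightarrow> 0 < a * b"
  by (auto simp: less_complex_def)

lemma fps_inverse_nth_pos:
  fixes f :: "complex fps"
  assumes f0: "0 < fps_nth f 0" and f1: "fps_nth f 1 < 0" and tail: "\<And>n. 1 \<le> n \<Longrightarrow> fps_nth f n \<le> 0"
  shows "0 < fps_nth (inverse f) n"
proof (induction n rule: less_induct)
  case (less n)
  have inv0: "0 < inverse (fps_nth f 0)"
    using f0 by (auto simp: less_complex_def)
  show ?case
  proof (cases n)
    case 0
    then show ?thesis using inv0 by (simp add: fps_inverse_def)
  next
    case (Suc m)
    have "(\<Sum>i=1..n. - fps_nth f i * fps_nth (inverse f) (n - i))
        = - fps_nth f 1 * fps_nth (inverse f) m + (\<Sum>i=2..n. - fps_nth f i * fps_nth (inverse f) (n - i))"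
      using Suc by (subst sum.atLeast_Suc_atMost) (simp_all add: numeral_2_eq_2)
    also have "0 < \<dots>"
    proof (rule add_pos_nonneg)
      show "0 < - fps_nth f 1 * fps_nth (inverse f) m"
        using f1 less.IH[of m] Suc by (intro complex_mult_pos) auto
      show "0 \<le> (\<Sum>i=2..n. - fps_nth f i * fps_nth (inverse f) (n - i))"
        using less.IH tail by (intro sum_nonneg mult_nonneg_nonneg) (auto intro: less_imp_le)
    qed
    finally have sum_pos: "0 < (\<Sum>i=1..n. - fps_nth f i * fps_nth (inverse f) (n - i))" .
    have "fps_nth (inverse f) n = - inverse (fps_nth f 0) * (\<Sum>i=1..n. fps_nth f i * fps_nth (inverse f) (n - i))"
      unfolding fps_inverse_def fps_nth_Abs_fps by (rule fps_right_inverse_constructor_rec) (simp add: Suc)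
    also have "\<dots> = inverse (fps_nth f 0) * (\<Sum>i=1..n. - fps_nth f i * fps_nth (inverse f) (n - i))"
      by (simp add: sum_negf)
    finally show ?thesis
      using inv0 sum_pos by (simp add: complex_mult_pos)
  qed
qed

lemma fps_power_nth_nonneg:
  fixes E :: "complex fps"
  assumes "\<And>n. 0 \<le> fps_nth E n"
  shows "0 \<le> fps_nth (E ^ i) n"
proof (induction i arbitrary: n)
  case 0
  then show ?case by (simp add: less_eq_complex_def)
next
  case (Suc i)
  then show ?case
    unfolding power_Suc fps_mult_nth by (intro sum_nonneg mult_nonneg_nonneg assms)
qed

lemma fps_nth_power_uminus: "fps_nth ((- E) ^ i) n = (-1) ^ i * fps_nth (E ^ i :: 'a :: comm_ring_1 fps) n"
proof -
  have "(- E) ^ i = (- 1) ^ i * E ^ i"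
    by (rule power_minus)
  also have "(- 1 :: 'a fps) ^ i = fps_const ((- 1) ^ i)"
    by (simp flip: fps_const_power)
  finally show ?thesis
    by (simp only: fps_mult_left_const_nth)
qed

lemma fps_nth_binomial_compose_uminus_neg:
  fixes E :: "complex fps" and \<mu> :: real
  assumes "0 < \<mu>" "\<mu> \<le> 1" "fps_nth E 0 = 0" "\<And>k. 0 \<le> fps_nth E k" "0 < fps_nth E n" "1 \<le> n"
  shows "fps_nth (fps_binomial (of_real \<mu>) oo - E) n < 0"
proof -
  define b where "b i = complex_of_real ((-1) ^ i * (\<mu> gchoose i))" for i
  have b_nonpos: "b i \<le> 0" if "1 \<le> i" for i
    using gbinomial_alternating_nonpos[OF assms(1,2) that] by (simp add: b_def less_eq_complex_def)
  have "fps_nth (fps_binomial (of_real \<mu>) oo - E) n = (\<Sum>i=0..n. b i * fps_nth (E ^ i) n)"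
    unfolding fps_compose_nth fps_nth_power_uminus
    by (simp add: b_def complex_of_real_gbinomial ac_simps)
  also have "\<dots> = b 1 * fps_nth E n + (\<Sum>i\<in>{0..n}-{1}. b i * fps_nth (E ^ i) n)"
    using assms(6) by (subst sum.remove[of _ 1]) auto
  also have "\<dots> < 0"
  proof (rule add_neg_nonpos)
    show "b 1 * fps_nth E n < 0"
      using assms(1,5) by (auto simp: b_def less_complex_def)
    show "(\<Sum>i\<in>{0..n}-{1}. b i * fps_nth (E ^ i) n) \<le> 0"
    proof (rule sum_nonpos)
      fix i assume "i \<in> {0..n}-{1}"
      then consider "i = 0" | "2 \<le> i" by fastforce
      then show "b i * fps_nth (E ^ i) n \<le> 0"
        by cases (use assms(6) b_nonpos fps_power_nth_nonneg[OF assms(4)] in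
                   \<open>auto intro: mult_nonpos_nonneg\<close>)
    qed
  qed
  finally show ?thesis .
qed

section \<open>Real parts and restrictions to the reals\<close>

lemma Re_powr_pos:
  assumes "0 < a" "a \<le> 1" "0 < Re z"
  shows "0 < Re (z powr complex_of_real a)"
proof -
  have "Re (z powr complex_of_real a) = exp (a * Re (Ln z)) * cos (a * Im (Ln z))"
    using assms(3) by (auto simp: powr_def Re_exp)
  moreover have "\<bar>a * Im (Ln z)\<bar> < pi / 2"
    using Re_Ln_pos_lt_imp[OF assms(3)] mult_left_le_one_le[of "\<bar>Im (Ln z)\<bar>" a] assms(1,2)
    by (simp add: abs_mult)
  then have "0 < cos (a * Im (Ln z))"
    by (intro cos_gt_zero_pi) auto
  ultimately show ?thesis by simp
qed

lemma Re_divide_real_add_pos: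
  assumes "0 < lam" "0 < Re x"
  shows "0 < Re (x / (complex_of_real lam + x))"
proof -
  have "0 < Re x * (lam + Re x) + Im x * Im x"
    using assms by (intro add_pos_nonneg) auto
  moreover have "0 < (lam + Re x)\<^sup>2 + (Im x)\<^sup>2"
    using assms by (intro add_pos_nonneg) auto
  ultimately show ?thesis
    by (simp add: Re_divide power2_eq_square)
qed

lemma Re_one_minus_pos: "norm (u::complex) < 1 \<Longrightarrow> 0 < Re (1 - u)"
  using complex_Re_le_cmod[of u] by simp

lemma has_real_derivative_Re_of_real:
  assumes "(F has_field_derivative D) (at (complex_of_real x))"
  shows "((\<lambda>t. Re (F (of_real t))) has_real_derivative Re D) (at x)"
proof -
  have "((\<lambda>t. F (of_real t)) has_derivative (\<lambda>t. t *\<^sub>R D)) (at x)"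
    using has_vector_derivative_real_field[OF assms] unfolding has_vector_derivative_def .
  then have "((\<lambda>t. Re (F (of_real t))) has_derivative (\<lambda>t. Re (t *\<^sub>R D))) (at x)"
    by (rule bounded_linear.has_derivative[OF bounded_linear_Re])
  moreover have "(\<lambda>t. Re (t *\<^sub>R D)) = (*) (Re D)"
    by (auto simp: mult.commute)
  ultimately show ?thesis
    by (simp add: has_field_derivative_def)
qed

lemma higher_deriv_Re_of_real:
  fixes f :: "real \<Rightarrow> real" and F :: "complex \<Rightarrow> complex"
  assumes hol: "F holomorphic_on S" and "open S"
    and eq: "\<And>t. of_real t \<in> S \<Longrightarrow> f t = Re (F (of_real t))"
    and "of_real x \<in> S"
  shows "(deriv ^^ k) f x = Re ((deriv ^^ k) F (of_real x))"
  using assms(4)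
proof (induction k arbitrary: x)
  case 0
  then show ?case using eq by simp
next
  case (Suc k)
  define H where "H = (deriv ^^ k) F"
  have "H holomorphic_on S"
    unfolding H_def using hol \<open>open S\<close> by (rule holomorphic_higher_deriv)
  then have "(H has_field_derivative deriv H (of_real x)) (at (of_real x))"
    using \<open>open S\<close> Suc.prems by (intro holomorphic_derivI)
  then have "((\<lambda>t. Re (H (of_real t))) has_real_derivative Re (deriv H (of_real x))) (at x)"
    by (rule has_real_derivative_Re_of_real)
  moreover have "\<forall>\<^sub>F t in nhds x. (deriv ^^ k) f t = Re (H (of_real t))"
  proof -
    have "open ((of_real :: real \<Rightarrow> complex) -` S)"
      using \<open>open S\<close> by (intro open_vimage continuous_intros)
    then have "\<forall>\<^sub>F t in nhds x. of_real t \<in> S"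
      using eventually_nhds_in_open Suc.prems by fastforce
    then show ?thesis
      by eventually_elim (simp add: Suc.IH H_def)
  qed
  ultimately have "((deriv ^^ k) f has_real_derivative Re (deriv H (of_real x))) (at x)"
    by (subst DERIV_cong_ev[OF refl _ refl])
  then show ?case
    by (simp add: DERIV_imp_deriv H_def)
qed

section \<open>Power series with nonpositive coefficients after the first\<close>

lemma power_series_tendsto_le_partial_sum:
  fixes c :: "nat \<Rightarrow> real"
  assumes S: "\<And>x. 0 \<le> x \<Longrightarrow> x < 1 \<Longrightarrow> (\<lambda>k. c k * x ^ k) sums f x"
    and nonpos: "\<And>k. 1 \<le> k \<Longrightarrow> c k \<le> 0"
    and lim: "(f \<longlongrightarrow> L) (at_left 1)"
  shows "L \<le> (\<Sum>k<Suc N. c k)"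
proof -
  have "f x \<le> (\<Sum>k<Suc N. c k * x ^ k)" if "0 \<le> x" "x < 1" for x
  proof -
    have tail: "(\<lambda>i. c (i + Suc N) * x ^ (i + Suc N)) sums (f x - (\<Sum>k<Suc N. c k * x ^ k))"
      using sums_split_initial_segment[OF S[OF that]] .
    have "c (i + Suc N) * x ^ (i + Suc N) \<le> 0" for i
      using nonpos[of "i + Suc N"] that by (simp add: mult_nonpos_nonneg)
    then have "f x - (\<Sum>k<Suc N. c k * x ^ k) \<le> 0"
      using sums_le[OF _ tail sums_zero] by blast
    then show ?thesis
      by simp
  qed
  then have "\<forall>\<^sub>F x in at_left 1. f x \<le> (\<Sum>k<Suc N. c k * x ^ k)"
    using eventually_at_left_real[of 0 1] by (auto elim: eventually_mono)
  moreover have "((\<lambda>x. \<Sum>k<Suc N. c k * x ^ k) \<longlongrightarrow> (\<Sum>k<Suc N. c k * 1 ^ k)) (at_left 1)"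
    by (intro tendsto_intros)
  ultimately have "L \<le> (\<Sum>k<Suc N. c k * 1 ^ k)"
    using tendsto_le[OF trivial_limit_at_left_real _ lim] by blast
  then show ?thesis
    by simp
qed

lemma sums_of_power_series_tendsto_nonpos_coeffs:
  fixes c :: "nat \<Rightarrow> real"
  assumes S: "\<And>x. 0 \<le> x \<Longrightarrow> x < 1 \<Longrightarrow> (\<lambda>k. c k * x ^ k) sums f x"
    and nonpos: "\<And>k. 1 \<le> k \<Longrightarrow> c k \<le> 0"
    and lim: "(f \<longlongrightarrow> L) (at_left 1)"
  shows "c sums L"
proof -
  note partial_ge = power_series_tendsto_le_partial_sum[OF S nonpos lim]
  have "summable (\<lambda>k. - c (Suc k))"
  proof (rule summableI_nonneg_bounded)
    show "0 \<le> - c (Suc k)" for k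
      using nonpos[of "Suc k"] by simp
    show "(\<Sum>k<N. - c (Suc k)) \<le> c 0 - L" for N
      using partial_ge[of N] sum.lessThan_Suc_shift[of c N] by (simp add: sum_negf)
  qed
  then have summable: "summable c"
    by (simp only: summable_minus_iff summable_Suc_iff)
  have "L \<le> suminf c"
  proof (rule LIMSEQ_le_const[OF summable_LIMSEQ[OF summable]])
    have "L \<le> sum c {..<n}" if "1 \<le> n" for n
      using partial_ge[of "n - 1"] that by simp
    then show "\<exists>N. \<forall>n\<ge>N. L \<le> sum c {..<n}"
      by blast
  qed
  moreover have "suminf c \<le> L"
  proof (rule tendsto_le[OF trivial_limit_at_left_real lim tendsto_const])
    have "suminf c \<le> f x" if "0 \<le> x" "x < 1" for x
    proof (rule sums_le[OF _ summable_sums[OF summable] S[OF that]])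
      show "c k \<le> c k * x ^ k" for k
      proof (cases "k = 0")
        case False
        then have "c k * 1 \<le> c k * x ^ k"
          using nonpos[of k] that by (intro mult_left_mono_neg power_le_one) auto
        then show ?thesis
          by simp
      qed simp
    qed
    then show "\<forall>\<^sub>F x in at_left 1. suminf c \<le> f x"
      using eventually_at_left_real[of 0 1] by (auto elim: eventually_mono)
  qed
  ultimately show ?thesis
    using summable_sums[OF summable] by simp
qed

lemma has_sum_of_sums_nonpos_tail:
  fixes f :: "nat \<Rightarrow> real"
  assumes "f sums s" "\<And>k. 1 \<le> k \<Longrightarrow> f k \<le> 0"
  shows "(f has_sum s) UNIV"
proof (rule norm_summable_imp_has_sum[OF _ assms(1)])
  have "\<forall>\<^sub>F k in sequentially. - f k = norm (f k)"
    using eventually_ge_at_top[of 1] by eventually_elim (simp add: assms(2))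
  moreover have "summable (\<lambda>k. - f k)"
    using assms(1) by (simp add: summable_minus_iff sums_iff)
  ultimately show "summable (\<lambda>k. norm (f k))"
    using summable_cong by fastforce
qed

section \<open>Upper triangular circulant matrices\<close>

lemma ut_circulant_has_sum:
  assumes "(f has_sum s) UNIV"
  shows "(ut_circulant f m has_sum s) UNIV"
proof -
  have "bij_betw (\<lambda>k. m + int k) UNIV {m..}"
    by (rule bij_betwI[where g = "\<lambda>n. nat (n - m)"]) auto
  moreover have "((\<lambda>k. ut_circulant f m (m + int k)) has_sum s) UNIV"
    using assms by (simp add: ut_circulant_def)
  ultimately have "(ut_circulant f m has_sum s) {m..}"
    using has_sum_reindex_bij_betw by blast
  then show ?thesis
    by (rule has_sum_cong_neutral[THEN iffD1, rotated -1]) (auto simp: ut_circulant_def)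
qed

lemma ut_circulant_nonpos_off_diagonal:
  assumes "\<And>k. 1 \<le> k \<Longrightarrow> f k \<le> 0" "m \<noteq> n"
  shows "ut_circulant f m n \<le> 0"
  using assms by (auto simp: ut_circulant_def)

lemma ut_circulant_transition_matrix:
  fixes f :: "nat \<Rightarrow> real"
  assumes pos: "0 < f 0" and neg: "\<And>k. 1 \<le> k \<Longrightarrow> f k < 0" and sum: "(f has_sum 0) UNIV"
  defines "P \<equiv> \<lambda>m n. (if m = n then 1 else 0) - ut_circulant f m n / f 0"
  shows "0 \<le> P m n" "(P m has_sum 1) UNIV" "m < n \<Longrightarrow> 0 < P m n"
proof -
  show "0 \<le> P m n"
  proof (cases "m = n")
    case True
    then show ?thesis
      using pos by (simp add: P_def ut_circulant_def)
  next
    case False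
    have "ut_circulant f m n \<le> 0"
      using neg by (intro ut_circulant_nonpos_off_diagonal[OF _ False]) (simp add: less_imp_le)
    then show ?thesis
      using False pos by (simp add: P_def divide_nonpos_pos)
  qed
  have "((\<lambda>n. if m = n then 1 else 0 :: real) has_sum 1) UNIV"
    by (rule has_sum_finite_neutralI[where B = "{m}"]) auto
  from has_sum_add[OF this has_sum_divide_const[OF ut_circulant_has_sum[OF sum], where c = "- f 0"]]
  show "(P m has_sum 1) UNIV"
    by (simp add: P_def)
  show "0 < P m n" if "m < n"
    using that pos neg[of "nat (n - m)"] by (simp add: P_def ut_circulant_def divide_neg_pos)
qed

section \<open>The generating function\<close>

text \<open>With X = (1 - u)^\<alpha> and g = X/(\<lambda> + X), the defect E = 1 - (\<lambda> + 1) g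
  = \<lambda>(\<lambda> + 1)/(\<lambda> + X) - \<lambda> vanishes at 0, and g^\<mu> = (\<lambda> + 1)^-\<mu> (1 - E)^\<mu>.\<close>

definition gML_defect :: "real \<Rightarrow> real \<Rightarrow> complex \<Rightarrow> complex" where
  "gML_defect \<alpha> lam u =
     of_real (lam * (lam + 1)) * inverse (of_real lam + (1 - u) powr of_real \<alpha>) - of_real lam"

definition gML_defect_fps :: "real \<Rightarrow> real \<Rightarrow> complex fps" where
  "gML_defect_fps \<alpha> lam =
     fps_const (of_real (lam * (lam + 1))) * inverse (fps_const (of_real lam) + (fps_binomial (of_real \<alpha>) oo - fps_X))
     - fps_const (of_real lam)"

definition gML_pow_fps :: "real \<Rightarrow> real \<Rightarrow> real \<Rightarrow> complex fps" where
  "gML_pow_fps \<alpha> lam \<mu> =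
     fps_const (of_real ((lam + 1) powr - \<mu>)) * (fps_binomial (of_real \<mu>) oo - gML_defect_fps \<alpha> lam)"

lemma gML_defect_fps_nth_0:
  assumes "0 < lam"
  shows "fps_nth (gML_defect_fps \<alpha> lam) 0 = 0"
proof -
  have "complex_of_real lam + 1 \<noteq> 0"
    using assms by (simp add: complex_eq_iff)
  then show ?thesis
    by (simp add: gML_defect_fps_def fps_nth_binomial_compose_uminus_X field_simps)
qed

lemma gML_defect_fps_nth_pos:
  assumes "0 < \<alpha>" "\<alpha> \<le> 1" "0 < lam" "1 \<le> n"
  shows "0 < fps_nth (gML_defect_fps \<alpha> lam) n"
proof -
  define D where "D = fps_const (complex_of_real lam) + (fps_binomial (of_real \<alpha>) oo - fps_X)"
  have D_nth: "fps_nth D k = of_real ((if k = 0 then lam else 0) + (-1) ^ k * (\<alpha> gchoose k))" for k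
    by (simp add: D_def fps_nth_binomial_compose_uminus_X complex_of_real_gbinomial)
  have "0 < fps_nth (inverse D) n"
  proof (rule fps_inverse_nth_pos)
    show "0 < fps_nth D 0" "fps_nth D 1 < 0"
      using assms by (simp_all add: D_nth less_complex_def)
    show "fps_nth D k \<le> 0" if "1 \<le> k" for k
      using gbinomial_alternating_nonpos[OF assms(1,2) that] that
      by (simp add: D_nth less_eq_complex_def)
  qed
  moreover have "fps_nth (gML_defect_fps \<alpha> lam) n = of_real (lam * (lam + 1)) * fps_nth (inverse D) n"
    using assms(4) by (simp add: gML_defect_fps_def D_def)
  ultimately show ?thesis
    using assms(3) by (simp add: complex_mult_pos less_complex_def)
qed

lemma gML_pow_fps_nth_0: "fps_nth (gML_pow_fps \<alpha> lam \<mu>) 0 = of_real ((lam + 1) powr - \<mu>)"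
  by (simp add: gML_pow_fps_def)

lemma gML_pow_fps_nth_neg:
  assumes "0 < \<alpha>" "\<alpha> \<le> 1" "0 < \<mu>" "\<mu> \<le> 1" "0 < lam" "1 \<le> n"
  shows "fps_nth (gML_pow_fps \<alpha> lam \<mu>) n < 0"
proof -
  have "fps_nth (fps_binomial (of_real \<mu>) oo - gML_defect_fps \<alpha> lam) n < 0"
  proof (rule fps_nth_binomial_compose_uminus_neg[OF assms(3,4) _ _ _ assms(6)])
    show "fps_nth (gML_defect_fps \<alpha> lam) 0 = 0"
      using gML_defect_fps_nth_0[OF assms(5)] .
    show "0 \<le> fps_nth (gML_defect_fps \<alpha> lam) k" for k
      using gML_defect_fps_nth_0[OF assms(5)] gML_defect_fps_nth_pos[OF assms(1,2,5), of k]
      by (cases "k = 0") auto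
    show "0 < fps_nth (gML_defect_fps \<alpha> lam) n"
      using gML_defect_fps_nth_pos[OF assms(1,2,5,6)] .
  qed
  then show ?thesis
    using assms(5) by (auto simp: gML_pow_fps_def less_complex_def mult_pos_neg)
qed

lemma gML_pow_cplx_holomorphic:
  assumes "0 < \<alpha>" "\<alpha> \<le> 1" "0 < lam"
  shows "gML_pow_cplx \<alpha> lam \<mu> holomorphic_on ball 0 1"
proof -
  define X where "X u = (1 - u) powr complex_of_real \<alpha>" for u
  have Re_X: "0 < Re (X u)" if "u \<in> ball 0 1" for u
    using Re_powr_pos[OF assms(1,2) Re_one_minus_pos] that by (simp add: X_def)
  have hol_X: "X holomorphic_on ball 0 1"
    unfolding X_def by (intro holomorphic_intros) (auto simp: complex_nonpos_Reals_iff dest!: Re_one_minus_pos)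
  have "complex_of_real lam + X u \<noteq> 0" if "u \<in> ball 0 1" for u
    using Re_X[OF that] assms(3) by (auto simp: complex_eq_iff)
  then have hol_g: "(\<lambda>u. X u / (complex_of_real lam + X u)) holomorphic_on ball 0 1"
    by (intro holomorphic_intros hol_X)
  have "X u / (complex_of_real lam + X u) \<notin> \<real>\<^sub>\<le>\<^sub>0" if "u \<in> ball 0 1" for u
    using Re_divide_real_add_pos[OF assms(3) Re_X[OF that]] by (auto simp: complex_nonpos_Reals_iff)
  then show ?thesis
    unfolding gML_pow_cplx_def X_def[symmetric]
    by (intro holomorphic_on_powr[OF hol_g holomorphic_on_const]) auto
qed

lemma gML_defect_has_fps_expansion:
  assumes "0 < lam"
  shows "gML_defect \<alpha> lam has_fps_expansion gML_defect_fps \<alpha> lam"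
proof -
  have "((\<lambda>x. (1 + x) powr complex_of_real \<alpha>) \<circ> uminus) has_fps_expansion
          (fps_binomial (of_real \<alpha>) oo - fps_X)"
    by (intro fps_expansion_intros) simp
  moreover have "(\<lambda>x. (1 + x) powr complex_of_real \<alpha>) \<circ> uminus = (\<lambda>u. (1 - u) powr complex_of_real \<alpha>)"
    by (simp add: o_def)
  ultimately have "(\<lambda>u. (1 - u) powr complex_of_real \<alpha>) has_fps_expansion
          (fps_binomial (of_real \<alpha>) oo - fps_X)"
    by simp
  then show ?thesis
    unfolding gML_defect_def gML_defect_fps_def
    using assms by (intro fps_expansion_intros) (auto simp: fps_nth_binomial_compose_uminus_X complex_eq_iff)
qed

lemma gML_pow_cplx_eq_binomial:
  assumes "0 < \<alpha>" "\<alpha> \<le> 1" "0 < lam" "norm u < 1"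
  shows "gML_pow_cplx \<alpha> lam \<mu> u
       = of_real ((lam + 1) powr - \<mu>) * (1 + - gML_defect \<alpha> lam u) powr of_real \<mu>"
proof -
  define X where "X = (1 - u) powr complex_of_real \<alpha>"
  have "0 < Re X"
    unfolding X_def using Re_powr_pos[OF assms(1,2) Re_one_minus_pos[OF assms(4)]] .
  then have "complex_of_real lam + X \<noteq> 0" "complex_of_real lam + 1 \<noteq> 0"
    using assms(3) by (auto simp: complex_eq_iff)
  then have "X / (of_real lam + X) = of_real (inverse (lam + 1)) * (1 + - gML_defect \<alpha> lam u)"
    by (simp add: gML_defect_def X_def[symmetric] divide_simps) (simp add: algebra_simps)
  then have "gML_pow_cplx \<alpha> lam \<mu> u
      = of_real (inverse (lam + 1)) powr of_real \<mu> * (1 + - gML_defect \<alpha> lam u) powr of_real \<mu>"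
    using assms(3) by (simp add: gML_pow_cplx_def X_def[symmetric] powr_times_real_left)
  also have "of_real (inverse (lam + 1)) powr complex_of_real \<mu> = of_real (inverse (lam + 1) powr \<mu>)"
    using assms(3) by (intro powr_of_real) simp
  also have "inverse (lam + 1) powr \<mu> = (lam + 1) powr - \<mu>"
    using assms(3) by (simp add: powr_minus inverse_powr)
  finally show ?thesis .
qed

lemma gML_pow_cplx_has_fps_expansion:
  assumes "0 < \<alpha>" "\<alpha> \<le> 1" "0 < lam"
  shows "gML_pow_cplx \<alpha> lam \<mu> has_fps_expansion gML_pow_fps \<alpha> lam \<mu>"
proof -
  have "(\<lambda>u. of_real ((lam + 1) powr - \<mu>) * ((\<lambda>x. (1 + x) powr of_real \<mu>) \<circ> (\<lambda>u. - gML_defect \<alpha> lam u)) u)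
          has_fps_expansion gML_pow_fps \<alpha> lam \<mu>"
    unfolding gML_pow_fps_def
    using gML_defect_has_fps_expansion[OF assms(3)] gML_defect_fps_nth_0[OF assms(3)]
    by (intro fps_expansion_intros) auto
  moreover have "\<forall>\<^sub>F u in nhds 0. u \<in> ball (0::complex) 1"
    by (intro eventually_nhds_in_open) auto
  then have "\<forall>\<^sub>F u in nhds 0. gML_pow_cplx \<alpha> lam \<mu> u
      = of_real ((lam + 1) powr - \<mu>) * ((\<lambda>x. (1 + x) powr of_real \<mu>) \<circ> (\<lambda>u. - gML_defect \<alpha> lam u)) u"
    by eventually_elim (simp add: gML_pow_cplx_eq_binomial[OF assms])
  ultimately show ?thesis
    by (subst has_fps_expansion_cong) auto
qed

lemma gML_pow_cplx_of_real:
  assumes "0 < lam" "x < 1"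
  shows "gML_pow_cplx \<alpha> lam \<mu> (of_real x) = of_real (gML_pow_real \<alpha> lam \<mu> x)"
proof -
  have "(1 - complex_of_real x) powr of_real \<alpha> = of_real ((1 - x) powr \<alpha>)"
    using assms(2) powr_of_real[of "1 - x" \<alpha>] by simp
  then have ratio: "(1 - complex_of_real x) powr of_real \<alpha> / (of_real lam + (1 - of_real x) powr of_real \<alpha>)
      = of_real ((1 - x) powr \<alpha> / (lam + (1 - x) powr \<alpha>))"
    by (simp only: of_real_add of_real_divide)
  have "0 \<le> (1 - x) powr \<alpha> / (lam + (1 - x) powr \<alpha>)"
    using assms(1) by simp
  then show ?thesis
    unfolding gML_pow_cplx_def gML_pow_real_def ratio by (rule powr_of_real)
qed

lemma gML_pow_fps_nth_eq_cML:
  assumes "0 < \<alpha>" "\<alpha> \<le> 1" "0 < \<mu>" "\<mu> \<le> 1" "0 < lam"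
  shows "fps_nth (gML_pow_fps \<alpha> lam \<mu>) k = of_real (cML \<alpha> lam \<mu> k)"
proof -
  let ?F = "gML_pow_cplx \<alpha> lam \<mu>"
  have "(deriv ^^ k) (gML_pow_real \<alpha> lam \<mu>) 0 = Re ((deriv ^^ k) ?F (of_real 0))"
    by (rule higher_deriv_Re_of_real[OF gML_pow_cplx_holomorphic[OF assms(1,2,5)] open_ball])
       (auto simp: gML_pow_cplx_of_real[OF assms(5)] abs_less_iff)
  then have "cML \<alpha> lam \<mu> k = Re ((deriv ^^ k) ?F 0) / fact k"
    by (simp add: cML_def)
  also have "\<dots> = Re (fps_nth (gML_pow_fps \<alpha> lam \<mu>) k)"
    using fps_nth_fps_expansion[OF gML_pow_cplx_has_fps_expansion[OF assms(1,2,5)], where n = k]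
    by (simp flip: Re_divide_of_real)
  finally have "cML \<alpha> lam \<mu> k = Re (fps_nth (gML_pow_fps \<alpha> lam \<mu>) k)" .
  moreover have "Im (fps_nth (gML_pow_fps \<alpha> lam \<mu>) k) = 0"
    using gML_pow_fps_nth_0 gML_pow_fps_nth_neg[OF assms, of k]
    by (cases "k = 0") (auto simp: less_complex_def)
  ultimately show ?thesis
    by (simp add: complex_eq_iff)
qed

lemma gML_pow_real_tendsto_0:
  assumes "0 < \<alpha>" "0 < \<mu>" "0 < lam"
  shows "(gML_pow_real \<alpha> lam \<mu> \<longlongrightarrow> 0) (at_left 1)"
proof -
  have near_1: "\<forall>\<^sub>F x in at_left (1::real). 0 < 1 - x"
    using eventually_at_left_real[of 0 1] by (auto elim: eventually_mono)
  have "((\<lambda>x::real. 1 - x) \<longlongrightarrow> 0) (at_left 1)"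
    by (rule tendsto_eq_intros)+ (auto simp: filterlim_at)
  then have "((\<lambda>x::real. (1 - x) powr \<alpha>) \<longlongrightarrow> 0) (at_left 1)"
    using near_1 assms(1) by (intro tendsto_zero_powrI tendsto_const) (auto elim: eventually_mono)
  then have "((\<lambda>x. (1 - x) powr \<alpha> / (lam + (1 - x) powr \<alpha>)) \<longlongrightarrow> 0 / (lam + 0)) (at_left 1)"
    using assms(3) by (intro tendsto_intros) auto
  then show ?thesis
    unfolding gML_pow_real_def using near_1 assms(2,3)
    by (intro tendsto_zero_powrI tendsto_const) (auto elim: eventually_mono)
qed

context
  fixes \<alpha> \<mu> lam :: real
  assumes \<alpha>_range: "0 < \<alpha>" "\<alpha> \<le> 1" and \<mu>_range: "0 < \<mu>" "\<mu> \<le> 1"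
    and lam_pos: "0 < lam"
begin

lemma cML_power_series:
  assumes "norm u < 1"
  shows "(\<lambda>k. complex_of_real (cML \<alpha> lam \<mu> k) * u ^ k) sums gML_pow_cplx \<alpha> lam \<mu> u"
proof -
  have "(\<lambda>k. (deriv ^^ k) (gML_pow_cplx \<alpha> lam \<mu>) 0 / fact k * (u - 0) ^ k) sums gML_pow_cplx \<alpha> lam \<mu> u"
    by (rule holomorphic_power_series[OF gML_pow_cplx_holomorphic[OF \<alpha>_range lam_pos]]) (simp add: assms)
  moreover have coeff: "(deriv ^^ k) (gML_pow_cplx \<alpha> lam \<mu>) 0 / fact k = of_real (cML \<alpha> lam \<mu> k)" for k
    using fps_nth_fps_expansion[OF gML_pow_cplx_has_fps_expansion[OF \<alpha>_range lam_pos, of \<mu>], where n = k]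
          gML_pow_fps_nth_eq_cML[OF \<alpha>_range \<mu>_range lam_pos, of k]
    by argo
  ultimately show ?thesis
    by (simp only: coeff diff_zero)
qed

lemma cML_0: "cML \<alpha> lam \<mu> 0 = (lam + 1) powr - \<mu>"
  using gML_pow_fps_nth_eq_cML[OF \<alpha>_range \<mu>_range lam_pos, of 0] by (simp add: gML_pow_fps_nth_0)

lemma cML_neg: "1 \<le> k \<Longrightarrow> cML \<alpha> lam \<mu> k < 0"
  using gML_pow_fps_nth_neg[OF \<alpha>_range \<mu>_range lam_pos] gML_pow_fps_nth_eq_cML[OF \<alpha>_range \<mu>_range lam_pos]
  by (simp add: less_complex_def)

lemma cML_sums_0: "cML \<alpha> lam \<mu> sums 0"
proof (rule sums_of_power_series_tendsto_nonpos_coeffs)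
  show "(\<lambda>k. cML \<alpha> lam \<mu> k * x ^ k) sums gML_pow_real \<alpha> lam \<mu> x" if "0 \<le> x" "x < 1" for x
  proof -
    have "(\<lambda>k. complex_of_real (cML \<alpha> lam \<mu> k * x ^ k)) sums of_real (gML_pow_real \<alpha> lam \<mu> x)"
      using cML_power_series[of "of_real x"] that gML_pow_cplx_of_real[OF lam_pos \<open>x < 1\<close>] by simp
    then show ?thesis
      by (simp only: sums_of_real_iff)
  qed
  show "cML \<alpha> lam \<mu> k \<le> 0" if "1 \<le> k" for k
    using cML_neg[OF that] by simp
  show "(gML_pow_real \<alpha> lam \<mu> \<longlongrightarrow> 0) (at_left 1)"
    using gML_pow_real_tendsto_0 \<alpha>_range(1) \<mu>_range(1) lam_pos .
qed

end

theorem mainTheorem16: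
  fixes \<alpha> \<mu> lam :: real
  assumes "0 < \<alpha>" "\<alpha> \<le> 1" "0 < \<mu>" "\<mu> \<le> 1" "0 < lam"
  defines "c \<equiv> cML \<alpha> lam \<mu>"
  defines "G \<equiv> ut_circulant c"
  defines "P \<equiv> (\<lambda>m n. (if m = n then 1 else 0) - G m n / c 0)"
  shows "(\<forall>u::complex. norm u < 1 \<longrightarrow>
            (\<lambda>k. complex_of_real (c k) * u ^ k) sums gML_pow_cplx \<alpha> lam \<mu> u)
       \<and> c 0 = (lam + 1) powr (- \<mu>) \<and> c 0 > 0
       \<and> (\<forall>k\<ge>1. c k < 0)
       \<and> c sums 0
       \<and> (\<forall>m. (G m has_sum 0) UNIV)
       \<and> (\<forall>m. G m m > 0)
       \<and> (\<forall>m n. m \<noteq> n \<longrightarrow> G m n \<le> 0)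
       \<and> (\<forall>m n. P m n \<ge> 0)
       \<and> (\<forall>m. (P m has_sum 1) UNIV)
       \<and> (\<forall>m n. m < n \<longrightarrow> P m n > 0)"
proof -
  have c0: "c 0 = (lam + 1) powr - \<mu>" and c0_pos: "0 < c 0"
    using cML_0[OF assms(1-5)] assms(5) by (simp_all add: c_def)
  have c_neg: "c k < 0" if "1 \<le> k" for k
    using cML_neg[OF assms(1-5) that] by (simp add: c_def)
  have c_sums: "c sums 0"
    using cML_sums_0[OF assms(1-5)] by (simp add: c_def)
  have c_has_sum: "(c has_sum 0) UNIV"
    using has_sum_of_sums_nonpos_tail[OF c_sums] c_neg less_imp_le by blast
  have series: "(\<lambda>k. complex_of_real (c k) * u ^ k) sums gML_pow_cplx \<alpha> lam \<mu> u" if "norm u < 1" for u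
    using cML_power_series[OF assms(1-5) that] by (simp add: c_def)
  have G_row: "(G m has_sum 0) UNIV" for m
    using ut_circulant_has_sum[OF c_has_sum] by (simp add: G_def)
  have G_diag: "0 < G m m" for m
    using c0_pos by (simp add: G_def ut_circulant_def)
  have G_off_diag: "G m n \<le> 0" if "m \<noteq> n" for m n
    using ut_circulant_nonpos_off_diagonal[of c, OF _ that] c_neg by (simp add: G_def less_imp_le)
  have P: "0 \<le> P m n" "(P m has_sum 1) UNIV" "m < n \<Longrightarrow> 0 < P m n" for m n
    using ut_circulant_transition_matrix[OF c0_pos c_neg c_has_sum] by (simp_all add: P_def G_def)
  show ?thesis
    using series c0 c0_pos c_neg c_sums G_row G_diag G_off_diag P by blast
qed

end
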